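(* Let $M=P+\varepsilon D\in\mathbb{DH}[t]$ be monic with $\operatorname{mrpf}(P)=1$, and suppose $M$ admits a factorization $M=(t-h_1)\cdots(t-h_k)$ with $h_i\in\mathbb{DH}$. Write $P\overline{P}=\prod_{i=1}^m N_i^{n_i}$ with pairwise coprime irreducible monic $N_i\in\mathbb{R}[t]$. Then for every $x_0\in\mathbb{R}$ and every $x=x_1\mathbf{i}+x_2\mathbf{j}+x_3\mathbf{k}$ with $x_1,x_2,x_3\in\mathbb{R}$, setting $X=Px\overline{P}+x_0(P\overline{D}-D\overline{P})\in\mathbb{H}[t]$, for every $i$ with $n_i>1$ the polynomial $N_i^{n_i}$ divides the real polynomial $X\overline{X}$. (Geometrically: every intersection point of multiplicity $\mu>1$ of a trajectory $t\mapsto x_0P\overline{P}+\varepsilon X$ of the motion parametrized by $M$ with the plane at infinity lies on the absolute circle with multiplicity $\mu$.)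
   Context: $\mathbb{D}=\mathbb{R}[\varepsilon]/\langle\varepsilon^2\rangle$ denotes the dual numbers. $\mathbb{H}$ denotes the real quaternions with basis $1,\mathbf{i},\mathbf{j},\mathbf{k}$, $\mathbf{i}^2=\mathbf{j}^2=\mathbf{k}^2=\mathbf{i}\mathbf{j}\mathbf{k}=-1$. The dual quaternions $\mathbb{DH}$ are $\mathbb{H}\otimes_{\mathbb{R}}\mathbb{D}$ ($\varepsilon$ central). Conjugation: $\overline{q_0+q_1\mathbf{i}+q_2\mathbf{j}+q_3\mathbf{k}}=q_0-q_1\mathbf{i}-q_2\mathbf{j}-q_3\mathbf{k}$; for polynomials $\overline{\sum m_it^i}=\sum\overline{m_i}t^i$, and $Q\overline{Q}$ is real-valued for $Q\in\mathbb{H}[t]$. $\mathbb{DH}[t]$ is the polynomial ring with $t$ commuting with all coefficients; $M=P+\varepsilon D$ with $P,D\in\mathbb{H}[t]$ is the decomposition into primal and dual part. $\operatorname{mrpf}(P)=1$ means $P$ has no factor $c\in\mathbb{R}[t]$ of positive degree. The trajectory of the point $x_0+\varepsilon x$ of projective 3-space under $M$ is $(P-\varepsilon D)(x_0+\varepsilon x)(\overline{P}+\varepsilon\overline{D})=x_0P\overline{P}+\varepsilon X$; its points at infinity correspond to zeros of $x_0P\overline{P}$, and the absolute circle is given by $x_0=0$, $\overline{X}X=0$. *)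

theory Defs
  imports "HOL-Computational_Algebra.Polynomial"
begin

text \<open>Quaternions q0 + q1 i + q2 j + q3 k with coefficients in a commutative ring.
  The polynomial ring H[t] (t central) is identified with quaternions over R[t],
  i.e. the type real poly quat.\<close>

datatype 'a quat = Quat (q0: 'a) (q1: 'a) (q2: 'a) (q3: 'a)

definition qzero :: "'a::comm_ring_1 quat" where "qzero = Quat 0 0 0 0"
definition qone :: "'a::comm_ring_1 quat" where "qone = Quat 1 0 0 0"

definition qadd :: "'a::comm_ring_1 quat \<Rightarrow> 'a quat \<Rightarrow> 'a quat" where
  "qadd a b = Quat (q0 a + q0 b) (q1 a + q1 b) (q2 a + q2 b) (q3 a + q3 b)"

definition qneg :: "'a::comm_ring_1 quat \<Rightarrow> 'a quat" where
  "qneg a = Quat (- q0 a) (- q1 a) (- q2 a) (- q3 a)"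

definition qsub :: "'a::comm_ring_1 quat \<Rightarrow> 'a quat \<Rightarrow> 'a quat" where
  "qsub a b = qadd a (qneg b)"

definition qmul :: "'a::comm_ring_1 quat \<Rightarrow> 'a quat \<Rightarrow> 'a quat" where
  "qmul a b = Quat
     (q0 a * q0 b - q1 a * q1 b - q2 a * q2 b - q3 a * q3 b)
     (q0 a * q1 b + q1 a * q0 b + q2 a * q3 b - q3 a * q2 b)
     (q0 a * q2 b - q1 a * q3 b + q2 a * q0 b + q3 a * q1 b)
     (q0 a * q3 b + q1 a * q2 b - q2 a * q1 b + q3 a * q0 b)"

definition qcnj :: "'a::comm_ring_1 quat \<Rightarrow> 'a quat" where
  "qcnj a = Quat (q0 a) (- q1 a) (- q2 a) (- q3 a)"

definition qscal :: "'a::comm_ring_1 \<Rightarrow> 'a quat \<Rightarrow> 'a quat" where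
  "qscal c a = Quat (c * q0 a) (c * q1 a) (c * q2 a) (c * q3 a)"

type_synonym qpoly = "real poly quat"

definition qconst :: "real quat \<Rightarrow> qpoly" where
  "qconst h = map_quat (\<lambda>a. [:a:]) h"

definition qvar :: qpoly where "qvar = Quat [:0, 1:] 0 0 0"

definition qcoeff :: "qpoly \<Rightarrow> nat \<Rightarrow> real quat" where
  "qcoeff P n = map_quat (\<lambda>p. coeff p n) P"

definition qdeg :: "qpoly \<Rightarrow> nat" where
  "qdeg P = max (max (degree (q0 P)) (degree (q1 P))) (max (degree (q2 P)) (degree (q3 P)))"

text \<open>Q * conj Q is real; this is its (real) scalar part.\<close>
definition qnorm :: "qpoly \<Rightarrow> real poly" where
  "qnorm Q = q0 (qmul Q (qcnj Q))"

definition mrpf_one :: "qpoly \<Rightarrow> bool" where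
  "mrpf_one P \<longleftrightarrow> \<not> (\<exists>c Q. degree c > 0 \<and> P = qscal c Q)"

text \<open>Dual quaternion polynomials M = P + eps D, represented as pairs (P, D).\<close>
type_synonym dqpoly = "qpoly \<times> qpoly"

definition dqmul :: "dqpoly \<Rightarrow> dqpoly \<Rightarrow> dqpoly" where
  "dqmul M N = (qmul (fst M) (fst N), qadd (qmul (fst M) (snd N)) (qmul (snd M) (fst N)))"

definition dqone :: dqpoly where "dqone = (qone, qzero)"

definition dqlin :: "real quat \<times> real quat \<Rightarrow> dqpoly" where
  "dqlin h = (qsub qvar (qconst (fst h)), qneg (qconst (snd h)))"

definition dqprod :: "(real quat \<times> real quat) list \<Rightarrow> dqpoly" where
  "dqprod hs = foldr (\<lambda>h acc. dqmul (dqlin h) acc) hs dqone"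

definition dq_monic :: "dqpoly \<Rightarrow> bool" where
  "dq_monic M \<longleftrightarrow> qcoeff (fst M) (qdeg (fst M)) = qone
      \<and> (\<forall>n\<ge>qdeg (fst M). qcoeff (snd M) n = qzero)"

end

theory Submission
  imports Defs "HOL-Computational_Algebra.Polynomial_Factorial" "HOL-Computational_Algebra.Field_as_Ring"
begin

text \<open>Expanding the norm gives
  \<open>X X\<^sup>* = P P\<^sup>* \<cdot> R + 4 x\<^sub>0\<^sup>2 (P P\<^sup>* \<cdot> D D\<^sup>* - S\<^sup>2)\<close> with \<open>S\<close> the scalar part of \<open>P D\<^sup>*\<close>,
  so it suffices that \<open>N\<^sup>a\<close> divides \<open>S\<close> whenever \<open>N\<^sup>a\<^sup>+\<^sup>1\<close> divides \<open>P P\<^sup>*\<close>, because then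
  \<open>N\<^sup>2\<^sup>a\<close> divides \<open>S\<^sup>2\<close> and \<open>2a \<ge> a + 1\<close> for \<open>a \<ge> 1\<close>. Since \<open>mrpf(P) = 1\<close>, no factor \<open>t - h\<^sub>i\<close> has a real
  primal part, so each factor norm is a monic real quadratic without real roots, and the only monic
  irreducible polynomial dividing it is the quadratic itself. Peeling off the
  first factor multiplies \<open>P P\<^sup>*\<close> by this quadratic \<open>\<nu>\<close> and turns \<open>S\<close> into
  \<open>\<nu> S' + P' P'\<^sup>* s\<close>; induction on the number of factors, distinguishing \<open>N = \<nu>\<close> from
  \<open>N\<close> coprime to \<open>\<nu>\<close>, gives the claim.\<close>

definition qreal :: "'a::zero quat \<Rightarrow> bool" where
  "qreal a \<longleftrightarrow> q1 a = 0 \<and> q2 a = 0 \<and> q3 a = 0"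

lemma qnorm_qmul: "qnorm (qmul A B) = qnorm A * qnorm B"
  by (simp add: qnorm_def qmul_def qcnj_def) algebra

lemma q0_qmul_qcnj_dual_part:
  "q0 (qmul (qmul A B) (qcnj (qadd (qmul A E) (qmul F B)))) =
     qnorm A * q0 (qmul B (qcnj E)) + qnorm B * q0 (qmul A (qcnj F))"
  by (simp add: qnorm_def qmul_def qcnj_def qadd_def) algebra

lemma qmul_qscal_left: "qmul (qscal c A) B = qscal c (qmul A B)"
  by (simp add: qmul_def qscal_def algebra_simps)

lemma qmul_qscal_right: "qmul A (qscal c B) = qscal c (qmul A B)"
  by (simp add: qmul_def qscal_def algebra_simps)

lemma qmul_qone_left: "qmul qone B = B"
  by (cases B) (simp add: qmul_def qone_def)

lemma qnorm_trajectory: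
  assumes "q0 x = 0"
  shows "qnorm (qadd (qmul (qmul P x) (qcnj P)) (qscal c (qsub (qmul P (qcnj D)) (qmul D (qcnj P))))) =
    qnorm P * (qnorm P * qnorm x + c * 2 * q0 (qmul x (qsub (qmul (qcnj P) D) (qmul (qcnj D) P)))) +
    4 * c * c * (qnorm P * qnorm D - q0 (qmul P (qcnj D)) * q0 (qmul P (qcnj D)))"
proof -
  obtain a b e where x: "x = Quat 0 a b e" using assms by (cases x) auto
  obtain p0 p1 p2 p3 where P: "P = Quat p0 p1 p2 p3" by (cases P)
  obtain d0 d1 d2 d3 where D: "D = Quat d0 d1 d2 d3" by (cases D)
  show ?thesis unfolding x P D
    by (simp add: qnorm_def qmul_def qcnj_def qadd_def qsub_def qneg_def qscal_def algebra_simps)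
qed

lemma dqprod_Cons: "dqprod (h # hs) = dqmul (dqlin h) (dqprod hs)"
  by (simp add: dqprod_def)

lemma qnorm_dqlin:
  "qnorm (fst (dqlin h)) =
     [:(q0 (fst h))\<^sup>2 + ((q1 (fst h))\<^sup>2 + (q2 (fst h))\<^sup>2 + (q3 (fst h))\<^sup>2), - 2 * q0 (fst h), 1:]"
  by (cases "fst h", rule poly_eqI)
    (simp add: dqlin_def qsub_def qadd_def qneg_def qvar_def qconst_def qnorm_def qmul_def qcnj_def
      coeff_pCons power2_eq_square algebra_simps split: nat.splits)

lemma qnorm_dqlin_rootfree_quadratic:
  assumes "\<not> qreal (fst h)"
  shows "degree (qnorm (fst (dqlin h))) = 2" "lead_coeff (qnorm (fst (dqlin h))) = 1"
    and "poly (qnorm (fst (dqlin h))) r \<noteq> 0"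
proof -
  define a where "a = q0 (fst h)"
  define s where "s = (q1 (fst h))\<^sup>2 + (q2 (fst h))\<^sup>2 + (q3 (fst h))\<^sup>2"
  have nu: "qnorm (fst (dqlin h)) = [:a\<^sup>2 + s, - 2 * a, 1:]"
    by (simp add: qnorm_dqlin a_def s_def)
  then show "degree (qnorm (fst (dqlin h))) = 2" "lead_coeff (qnorm (fst (dqlin h))) = 1"
    by simp_all
  have "s \<noteq> 0"
    using assms by (simp add: s_def qreal_def add_nonneg_eq_0_iff)
  then have "s > 0" by (simp add: s_def order_neq_le_trans)
  moreover have "poly (qnorm (fst (dqlin h))) r = (r - a)\<^sup>2 + s"
    by (simp add: nu power2_eq_square algebra_simps)
  ultimately show "poly (qnorm (fst (dqlin h))) r \<noteq> 0"
    by (metis add_nonneg_pos less_irrefl zero_le_power2)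
qed

lemma dqlin_real: "qreal (fst h) \<Longrightarrow> fst (dqlin h) = qscal [:- q0 (fst h), 1:] qone"
  by (cases "fst h")
    (simp add: qreal_def dqlin_def qsub_def qadd_def qneg_def qvar_def qconst_def qscal_def qone_def)

lemma dqprod_real_factor:
  assumes "h \<in> set hs" "qreal (fst h)"
  shows "\<exists>Q. fst (dqprod hs) = qscal [:- q0 (fst h), 1:] Q"
  using assms(1)
proof (induction hs)
  case (Cons g hs)
  show ?case
  proof (cases "g = h")
    case True
    then show ?thesis
      by (auto simp: dqprod_Cons dqmul_def dqlin_real[OF assms(2)] qmul_qscal_left qmul_qone_left)
  next
    case False
    with Cons obtain Q where "fst (dqprod hs) = qscal [:- q0 (fst h), 1:] Q" by auto
    then show ?thesis by (auto simp: dqprod_Cons dqmul_def qmul_qscal_right)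
  qed
qed simp

lemma mrpf_one_dqprod_imp_nonreal:
  assumes "mrpf_one (fst (dqprod hs))" "h \<in> set hs"
  shows "\<not> qreal (fst h)"
proof
  assume "qreal (fst h)"
  then obtain Q where "fst (dqprod hs) = qscal [:- q0 (fst h), 1:] Q"
    using dqprod_real_factor assms(2) by blast
  moreover have "degree [:- q0 (fst h), 1:] > 0" by simp
  ultimately show False using assms(1) unfolding mrpf_one_def by blast
qed

lemma monic_irreducible_dvd_rootfree_quadratic_eq:
  fixes N q :: "'a::field poly"
  assumes irr: "irreducible N" and monic_N: "lead_coeff N = 1" and dvd: "N dvd q"
    and deg_q: "degree q = 2" and monic_q: "lead_coeff q = 1" and rootfree: "\<And>r. poly q r \<noteq> 0"
  shows "N = q"
proof -
  obtain k where q: "q = N * k" using dvd by (rule dvdE)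
  have "N \<noteq> 0" "k \<noteq> 0" using q deg_q irr by auto
  then have deg: "degree N + degree k = 2" using q deg_q by (simp add: degree_mult_eq)
  have "degree N \<noteq> 0"
    using irreducible_not_unit[OF irr] is_unit_iff_degree[OF \<open>N \<noteq> 0\<close>] by blast
  moreover have "degree N \<noteq> 1"
  proof
    assume "degree N = 1"
    then obtain a b where N: "N = [:b, a:]" "a \<noteq> 0" by (rule degree1_coeffs)
    then have "poly q (- b / a) = 0" by (simp add: q)
    with rootfree show False by blast
  qed
  ultimately have "degree k = 0" using deg by linarith
  moreover have "lead_coeff k = 1" using monic_N monic_q by (simp add: q lead_coeff_mult)
  ultimately have "k = 1" by (metis degree_eq_zeroE lead_coeff_pCons(2) one_pCons)
  then show ?thesis by (simp add: q)
qed

lemma power_dvd_qnorm_imp_power_dvd_scalar: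
  fixes N :: "real poly"
  assumes "\<forall>h\<in>set hs. \<not> qreal (fst h)" and irr: "irreducible N" and monic: "lead_coeff N = 1"
    and "N ^ Suc a dvd qnorm (fst (dqprod hs))"
  shows "N ^ a dvd q0 (qmul (fst (dqprod hs)) (qcnj (snd (dqprod hs))))"
  using assms(1,4)
proof (induction hs arbitrary: a)
  case Nil
  then show ?case by (simp add: dqprod_def dqone_def qmul_def qcnj_def qone_def qzero_def)
next
  case (Cons h hs)
  define \<nu> where "\<nu> = qnorm (fst (dqlin h))"
  define P where "P = fst (dqprod hs)"
  define S where "S = q0 (qmul P (qcnj (snd (dqprod hs))))"
  have norm_Cons: "qnorm (fst (dqprod (h # hs))) = \<nu> * qnorm P"
    by (simp add: dqprod_Cons dqmul_def qnorm_qmul \<nu>_def P_def)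
  have scalar_Cons: "q0 (qmul (fst (dqprod (h # hs))) (qcnj (snd (dqprod (h # hs))))) =
      \<nu> * S + qnorm P * q0 (qmul (fst (dqlin h)) (qcnj (snd (dqlin h))))"
    by (simp add: dqprod_Cons dqmul_def q0_qmul_qcnj_dual_part \<nu>_def P_def S_def)
  have IH: "N ^ Suc b dvd qnorm P \<Longrightarrow> N ^ b dvd S" for b
    using Cons by (simp add: P_def S_def)
  have rootfree: "degree \<nu> = 2" "lead_coeff \<nu> = 1" "\<And>r. poly \<nu> r \<noteq> 0"
    using qnorm_dqlin_rootfree_quadratic Cons.prems(1) by (auto simp: \<nu>_def)
  have "N ^ a dvd qnorm P \<and> N ^ a dvd \<nu> * S"
  proof (cases "N dvd \<nu>")
    case True
    then have "N = \<nu>"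
      using monic_irreducible_dvd_rootfree_quadratic_eq[OF irr monic] rootfree by blast
    with Cons.prems(2) rootfree(1) have "N ^ a dvd qnorm P"
      by (auto simp: norm_Cons)
    moreover have "N ^ a dvd \<nu> * S"
    proof (cases a)
      case (Suc b)
      with IH \<open>N ^ a dvd qnorm P\<close> have "N ^ b dvd S" by blast
      with Suc \<open>N = \<nu>\<close> show ?thesis by (simp add: mult_dvd_mono)
    qed simp
    ultimately show ?thesis ..
  next
    case False
    have "coprime (N ^ Suc a) \<nu>"
      using prime_elem_imp_coprime[OF field_poly_irreducible_imp_prime[OF irr] False] by simp
    then have "N ^ Suc a dvd qnorm P"
      using Cons.prems(2) by (simp add: norm_Cons coprime_dvd_mult_right_iff)
    then show ?thesis using IH by (auto intro: dvd_mult_left[of _ N] simp: power_Suc2)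
  qed
  then show ?case by (simp add: scalar_Cons)
qed

lemma power_dvd_qnorm_trajectory:
  assumes "q0 x = 0" and "N ^ k dvd qnorm P" and "N ^ k dvd q0 (qmul P (qcnj D)) * q0 (qmul P (qcnj D))"
  shows "N ^ k dvd qnorm (qadd (qmul (qmul P x) (qcnj P)) (qscal c (qsub (qmul P (qcnj D)) (qmul D (qcnj P)))))"
  using assms by (simp add: qnorm_trajectory)

theorem theorem2:
  fixes P D :: qpoly and hs :: "(real quat \<times> real quat) list"
    and m :: nat and N :: "nat \<Rightarrow> real poly" and n :: "nat \<Rightarrow> nat"
  assumes monic: "dq_monic (P, D)"
    and mrpf: "mrpf_one P"
    and fact: "(P, D) = dqprod hs"
    and decomp: "qnorm P = (\<Prod>i\<in>{1..m}. N i ^ n i)"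
    and irr: "\<forall>i\<in>{1..m}. irreducible (N i) \<and> lead_coeff (N i) = 1"
    and copr: "\<forall>i\<in>{1..m}. \<forall>j\<in>{1..m}. i \<noteq> j \<longrightarrow> coprime (N i) (N j)"
  shows "\<forall>(x0::real) x1 x2 x3.
     (let x = qconst (Quat 0 x1 x2 x3);
          X = qadd (qmul (qmul P x) (qcnj P))
                   (qscal [:x0:] (qsub (qmul P (qcnj D)) (qmul D (qcnj P))))
      in \<forall>i\<in>{1..m}. n i > 1 \<longrightarrow> N i ^ n i dvd qnorm X)"
proof (intro allI, unfold Let_def, intro ballI impI)
  fix x0 x1 x2 x3 :: real and i
  assume i: "i \<in> {1..m}" and "n i > 1"
  then obtain a where a: "n i = Suc a" "a \<ge> 1" by (cases "n i") auto
  have PD: "P = fst (dqprod hs)" "D = snd (dqprod hs)" using fact by (metis fst_conv snd_conv)+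
  have nonreal: "\<forall>h\<in>set hs. \<not> qreal (fst h)"
    using mrpf_one_dqprod_imp_nonreal mrpf by (simp add: PD)
  have norm: "N i ^ n i dvd qnorm P" unfolding decomp using i by (intro dvd_prodI) auto
  then have "N i ^ a dvd q0 (qmul P (qcnj D))"
    using power_dvd_qnorm_imp_power_dvd_scalar[OF nonreal] irr i a by (simp add: PD)
  then have "N i ^ (a + a) dvd q0 (qmul P (qcnj D)) * q0 (qmul P (qcnj D))"
    by (simp add: power_add mult_dvd_mono)
  moreover have "N i ^ n i dvd N i ^ (a + a)" using a by (intro le_imp_power_dvd) simp
  ultimately show "N i ^ n i dvd qnorm (qadd (qmul (qmul P (qconst (Quat 0 x1 x2 x3))) (qcnj P))
      (qscal [:x0:] (qsub (qmul P (qcnj D)) (qmul D (qcnj P)))))"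
    using norm by (intro power_dvd_qnorm_trajectory) (auto simp: qconst_def intro: dvd_trans)
qed

end
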